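(* Consider algorithm PredFL processing a demand $x$ with prediction $\hat f_x$ such that $d(x,\hat f_x)\le f$, and suppose that at that moment the nearest open facility $f_{open}$ to $x$ satisfies $r_x:=d(\hat f_x,f_{open})\le f$. Let $\mathrm{cost}_x$ denote the facility-opening cost incurred while processing $x$ plus the connection cost of $x$, where $x$ is connected to $\hat f_x$ if a facility is opened there and to $f_{open}$ otherwise. Then $$\mathbb E[\mathrm{cost}_x]\le d^*(x)+r_x+\frac{r_x}{f}\,\eta_x+\Bigl(1-\frac{r_x}{f}\Bigr)\eta_{open},$$ where $d^*(x)=d(x,c^*_x)$, $\eta_x=d(\hat f_x,c^*_x)$ and $\eta_{open}=d(f_{open},c^*_x)$.
   Context: Online Facility Location with uniform facility cost $f>0$ in a metric space $(\mathcal M,d)$; a fixed optimal offline solution assigns each demand $x$ to an optimal facility $c^*_x$. Algorithm PredFL: maintain the set $\mathcal O$ of open facilities; when demand $x$ with prediction $\hat f_x$ arrives, let $f_{open}=\arg\min_{j\in\mathcal O}d(x,j)$; if $d(x,\hat f_x)>f$ open a facility at $x$; otherwise, with $r_x=d(f_{open},\hat f_x)$, open a facility at $\hat f_x$ with probability $\min\{1,r_x/f\}$. *)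

theory Defs
  imports "HOL-Probability.Probability"
begin

text \<open>Random outcome of PredFL on a demand x with d(x, fhat) <= f:
  True = a facility is opened at fhat (probability min 1 (r_x / f)),
  False = no facility opened, x is connected to f_open.\<close>
definition predfl_open :: "real \<Rightarrow> 'a::metric_space \<Rightarrow> 'a \<Rightarrow> bool pmf" where
  "predfl_open f fhat fopen = bernoulli_pmf (min 1 (dist fopen fhat / f))"

definition predfl_cost :: "real \<Rightarrow> 'a::metric_space \<Rightarrow> 'a \<Rightarrow> 'a \<Rightarrow> bool \<Rightarrow> real" where
  "predfl_cost f x fhat fopen b = (if b then f + dist x fhat else dist x fopen)"

end

theory Submission
  imports Defs
begin

text \<open>With probability p = r/f the algorithm pays f + d(x, fhat), otherwise d(x, fopen).
  The opening cost f p equals r exactly, and each connection distance is bounded by the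
  triangle inequality through the optimal facility cstar.\<close>

lemma expectation_predfl_cost:
  assumes "f > 0" "dist fhat fopen \<le> f"
  shows "measure_pmf.expectation (predfl_open f fhat fopen) (predfl_cost f x fhat fopen)
    = dist fhat fopen + (dist fhat fopen / f) * dist x fhat
      + (1 - dist fhat fopen / f) * dist x fopen"
proof -
  let ?p = "dist fhat fopen / f"
  have p_range: "0 \<le> ?p" "?p \<le> 1" using assms by auto
  have "min 1 (dist fopen fhat / f) = ?p"
    using p_range by (simp add: dist_commute)
  then have "measure_pmf.expectation (predfl_open f fhat fopen) (predfl_cost f x fhat fopen)
      = ?p * (f + dist x fhat) + (1 - ?p) * dist x fopen"
    unfolding predfl_open_def predfl_cost_def using p_range by simp
  also have "\<dots> = dist fhat fopen + ?p * dist x fhat + (1 - ?p) * dist x fopen"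
    using assms(1) by (simp add: field_simps)
  finally show ?thesis .
qed

lemma convex_combination_dist_le:
  fixes p :: real
  assumes "0 \<le> p" "p \<le> 1"
  shows "p * dist x a + (1 - p) * dist x b
    \<le> dist x c + p * dist a c + (1 - p) * dist b c"
proof -
  have "dist x a \<le> dist x c + dist a c" "dist x b \<le> dist x c + dist b c"
    using dist_triangle[of x _ c] by (simp_all add: dist_commute)
  then have "p * dist x a \<le> p * (dist x c + dist a c)"
    and "(1 - p) * dist x b \<le> (1 - p) * (dist x c + dist b c)"
    using assms by (simp_all add: mult_left_mono)
  then show ?thesis by (simp add: algebra_simps)
qed

theorem mainTheorem4:
  fixes f :: real and x fhat fopen cstar :: "'a::metric_space" and Opn :: "'a set"
  assumes "f > 0"
    and "finite Opn" and "fopen \<in> Opn" and "\<forall>j\<in>Opn. dist x fopen \<le> dist x j"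
    and "dist x fhat \<le> f"
    and "dist fhat fopen \<le> f"
  shows "measure_pmf.expectation (predfl_open f fhat fopen) (predfl_cost f x fhat fopen)
     \<le> dist x cstar + dist fhat fopen + (dist fhat fopen / f) * dist fhat cstar
       + (1 - dist fhat fopen / f) * dist fopen cstar"
  \<comment> \<open>The bound holds for any point fopen.\<close>
proof -
  have "0 \<le> dist fhat fopen / f" "dist fhat fopen / f \<le> 1"
    using assms(1,6) by auto
  from convex_combination_dist_le[OF this, of x fhat fopen cstar]
  show ?thesis
    unfolding expectation_predfl_cost[OF assms(1,6)] by linarith
qed

end
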